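(* Let $\mathbf{L}\in Q^2(\mathbb{D}^2)$. An analytic function $F\colon\mathbb{D}^2\to\mathbb{C}$ has bounded $\mathbf{L}$-index in joint variables if and only if for each $R=(r_1,r_2)\in(0,\beta]\times(0,\beta]$ there exist $n_0\in\mathbb{Z}_+$ and $p_0>0$ such that for every $z^0=(z_1^0,z_2^0)\in\mathbb{D}^2$ there exists $(k_1^0,k_2^0)\in\mathbb{Z}_+^2$ with $0\le k_1^0+k_2^0\le n_0$ and $$\max\left\{\frac{|F^{(k_1,k_2)}(z)|}{k_1!k_2!\,l_1^{k_1}(z)l_2^{k_2}(z)}: k_1+k_2\le n_0,\ z\in\mathbb{D}^2\Big[z^0,\frac{R}{\mathbf{L}(z^0)}\Big]\right\}\le \frac{p_0}{k_1^0!k_2^0!}\,\frac{|F^{(k_1^0,k_2^0)}(z^0)|}{l_1^{k_1^0}(z^0)\,l_2^{k_2^0}(z^0)}.$$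
   Context: $\mathbb{D}^2=\{(z_1,z_2)\in\mathbb{C}^2:|z_1|<1,|z_2|<1\}$, $\mathbb{Z}_+=\{0,1,2,\dots\}$, $\mathbb{R}_+=[0,\infty)$. A constant $\beta>1$ is fixed. $\mathbf{L}(z)=(l_1(z),l_2(z))$, where each $l_j\colon\mathbb{D}^2\to\mathbb{R}_+$ is continuous and satisfies $l_j(z_1,z_2)>\beta/(1-|z_j|)$ for all $(z_1,z_2)\in\mathbb{D}^2$, $j=1,2$. For $z^0\in\mathbb{C}^2$ and $R=(r_1,r_2)\in\mathbb{R}_+^2$: $\mathbb{D}^2[z^0,R]=\{z:|z_j-z_j^0|\le r_j,\ j=1,2\}$ and $\frac{R}{\mathbf{L}(z^0)}=\big(\frac{r_1}{l_1(z^0)},\frac{r_2}{l_2(z^0)}\big)$. $F^{(p,q)}=\frac{\partial^{p+q}F}{\partial z_1^p\partial z_2^q}$. An analytic $F\colon\mathbb{D}^2\to\mathbb{C}$ has bounded $\mathbf{L}$-index in joint variables if there is $n_0\in\mathbb{Z}_+$ such that for all $z\in\mathbb{D}^2$ and all $(p_1,p_2)\in\mathbb{Z}_+^2$: $\frac{|F^{(p_1,p_2)}(z)|}{p_1!p_2!\,l_1^{p_1}(z)l_2^{p_2}(z)}\le\max\{\frac{|F^{(k_1,k_2)}(z)|}{k_1!k_2!\,l_1^{k_1}(z)l_2^{k_2}(z)}:0\le k_1+k_2\le n_0\}$. $Q^2(\mathbb{D}^2)$ is the class of such $\mathbf{L}$ for which, for all $R=(r_1,r_2)\in[0,\beta]^2$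 and $j=1,2$, $0<\lambda_{1,j}(R)\le\lambda_{2,j}(R)<\infty$, where $\lambda_{1,j}(R)=\inf_{z^0\in\mathbb{D}^2}\inf\{l_j(z)/l_j(z^0): z\in\mathbb{D}^2[z^0,R/\mathbf{L}(z^0)]\}$ and $\lambda_{2,j}(R)=\sup_{z^0\in\mathbb{D}^2}\sup\{l_j(z)/l_j(z^0): z\in\mathbb{D}^2[z^0,R/\mathbf{L}(z^0)]\}$. *)

theory Defs
  imports "HOL-Analysis.Analysis"
begin

definition bidisc :: "(complex \<times> complex) set" where
  "bidisc = {z. norm (fst z) < 1 \<and> norm (snd z) < 1}"

definition polydisc :: "complex \<times> complex \<Rightarrow> real \<times> real \<Rightarrow> (complex \<times> complex) set" where
  "polydisc z0 R = {z. norm (fst z - fst z0) \<le> fst R \<and> norm (snd z - snd z0) \<le> snd R}"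

text \<open>Analytic (holomorphic) in two variables on the bidisc: continuous and
  holomorphic in each variable separately (Osgood's characterization).\<close>
definition analytic_bidisc :: "(complex \<times> complex \<Rightarrow> complex) \<Rightarrow> bool" where
  "analytic_bidisc F \<longleftrightarrow> continuous_on bidisc F \<and>
     (\<forall>w. norm w < 1 \<longrightarrow> (\<lambda>u. F (u, w)) holomorphic_on ball 0 1) \<and>
     (\<forall>u. norm u < 1 \<longrightarrow> (\<lambda>w. F (u, w)) holomorphic_on ball 0 1)"

definition pderiv2 :: "(complex \<times> complex \<Rightarrow> complex) \<Rightarrow> nat \<Rightarrow> nat \<Rightarrow> complex \<times> complex \<Rightarrow> complex" where
  "pderiv2 F p q z = (deriv ^^ p) (\<lambda>u. (deriv ^^ q) (\<lambda>w. F (u, w)) (snd z)) (fst z)"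

definition nterm :: "(complex \<times> complex \<Rightarrow> complex) \<Rightarrow> (complex \<times> complex \<Rightarrow> real)
     \<Rightarrow> (complex \<times> complex \<Rightarrow> real) \<Rightarrow> nat \<Rightarrow> nat \<Rightarrow> complex \<times> complex \<Rightarrow> real" where
  "nterm F l1 l2 p q z =
     norm (pderiv2 F p q z) / (fact p * fact q * l1 z ^ p * l2 z ^ q)"

definition admissible_L :: "real \<Rightarrow> (complex \<times> complex \<Rightarrow> real) \<Rightarrow> (complex \<times> complex \<Rightarrow> real) \<Rightarrow> bool" where
  "admissible_L \<beta> l1 l2 \<longleftrightarrow> \<beta> > 1 \<and> continuous_on bidisc l1 \<and> continuous_on bidisc l2 \<and>
     (\<forall>z\<in>bidisc. l1 z > \<beta> / (1 - norm (fst z)) \<and> l2 z > \<beta> / (1 - norm (snd z)))"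

definition bounded_L_index :: "(complex \<times> complex \<Rightarrow> complex) \<Rightarrow> (complex \<times> complex \<Rightarrow> real)
     \<Rightarrow> (complex \<times> complex \<Rightarrow> real) \<Rightarrow> bool" where
  "bounded_L_index F l1 l2 \<longleftrightarrow>
     (\<exists>n0::nat. \<forall>z\<in>bidisc. \<forall>p1 p2.
        nterm F l1 l2 p1 p2 z \<le>
          Max {nterm F l1 l2 k1 k2 z | k1 k2. k1 + k2 \<le> n0})"

text \<open>The class Q^2(D^2): for all R in [0,beta]^2 and j = 1,2,
  0 < lambda_{1,j}(R) and lambda_{2,j}(R) < infinity (lambda_1 \<le> lambda_2 is automatic),
  where lambda_{1,j}, lambda_{2,j} are the inf / sup of l_j(z)/l_j(z0) over z0 in D^2
  and z in D^2 intersected with the polydisc D^2[z0, R/L(z0)].\<close>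
definition Q2 :: "real \<Rightarrow> (complex \<times> complex \<Rightarrow> real) \<Rightarrow> (complex \<times> complex \<Rightarrow> real) \<Rightarrow> bool" where
  "Q2 \<beta> l1 l2 \<longleftrightarrow>
     (\<forall>r1 r2. 0 \<le> r1 \<and> r1 \<le> \<beta> \<and> 0 \<le> r2 \<and> r2 \<le> \<beta> \<longrightarrow>
       (\<forall>l \<in> {l1, l2}.
          (\<exists>c>0. \<forall>z0\<in>bidisc. \<forall>z\<in>bidisc \<inter> polydisc z0 (r1 / l1 z0, r2 / l2 z0). c \<le> l z / l z0) \<and>
          (\<exists>C. \<forall>z0\<in>bidisc. \<forall>z\<in>bidisc \<inter> polydisc z0 (r1 / l1 z0, r2 / l2 z0). l z / l z0 \<le> C)))"

end

theory Submission
  imports Defs "HOL-Complex_Analysis.Complex_Analysis"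
begin

text \<open>
  Suppose first that F has bounded L-index with index N. Expanding a partial derivative
  F^(k1,k2) in one variable around z and estimating every Taylor coefficient by the maximum
  of the normalized derivatives of order at most N shows that this maximum grows at most by
  the factor 2^(N+1) \<Lambda>^N when z moves by 1/(4 l_j(z)) along the j-th axis, where \<Lambda>
  bounds the oscillation of L on the polydisc. Since L belongs to Q^2, every point of
  D^2[z0, R/L(z0)] is reached from z0 by a number of such steps independent of z0, which gives
  the inequality with a uniform p0.
  Conversely, Cauchy's inequality on the polydisc D^2[z, \<beta>/L(z)], whose size is fixed by
  the hypothesis with R = (\<beta>, \<beta>), bounds the normalized derivative of order (p, q) at z
  by p0 \<beta>^-(p+q) times one of order at most n0; for p + q large this is below the maximum.
\<close>

section \<open>Circle integrals depending on a parameter\<close>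

lemma contour_integrable_circlepath_param:
  fixes \<Phi> :: "complex \<Rightarrow> complex \<Rightarrow> complex"
  assumes cont: "continuous_on (S \<times> sphere c \<rho>) (\<lambda>(x, \<eta>). \<Phi> x \<eta>)"
    and "0 < \<rho>" and "x \<in> S"
  shows "\<Phi> x contour_integrable_on circlepath c \<rho>"
proof (rule contour_integrable_continuous_circlepath)
  have "continuous_on (sphere c \<rho>) ((\<lambda>(x, \<eta>). \<Phi> x \<eta>) \<circ> Pair x)"
    by (intro continuous_on_compose continuous_intros continuous_on_subset[OF cont])
       (use assms in auto)
  then show "continuous_on (path_image (circlepath c \<rho>)) (\<Phi> x)"
    using assms by (simp add: path_image_circlepath_nonneg o_def)
qed

lemma continuous_on_contour_integral_circlepath_param:
  fixes \<Phi> :: "complex \<Rightarrow> complex \<Rightarrow> complex"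
  assumes S: "open S" and cont: "continuous_on (S \<times> sphere c \<rho>) (\<lambda>(x, \<eta>). \<Phi> x \<eta>)"
    and \<rho>: "0 < \<rho>"
  shows "continuous_on S (\<lambda>x. contour_integral (circlepath c \<rho>) (\<Phi> x))"
  unfolding continuous_on_eq_continuous_at[OF S]
proof
  fix x0 assume "x0 \<in> S"
  then obtain s where s: "0 < s" "cball x0 s \<subseteq> S"
    using open_contains_cball S by blast
  have uc: "uniformly_continuous_on (cball x0 s \<times> sphere c \<rho>) (\<lambda>(x, \<eta>). \<Phi> x \<eta>)"
    by (rule compact_uniformly_continuous[OF continuous_on_subset[OF cont]])
       (use s in \<open>auto simp: compact_Times\<close>)
  have "uniform_limit (sphere c \<rho>) \<Phi> (\<Phi> x0) (at x0)"
    unfolding uniform_limit_iff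
  proof (intro allI impI)
    fix e :: real assume "0 < e"
    then obtain d where "0 < d" and d: "\<And>a b. a \<in> cball x0 s \<times> sphere c \<rho> \<Longrightarrow>
        b \<in> cball x0 s \<times> sphere c \<rho> \<Longrightarrow> dist b a < d \<Longrightarrow>
        dist ((\<lambda>(x, \<eta>). \<Phi> x \<eta>) b) ((\<lambda>(x, \<eta>). \<Phi> x \<eta>) a) < e"
      using uc \<open>0 < e\<close> unfolding uniformly_continuous_on_def by metis
    show "\<forall>\<^sub>F x in at x0. \<forall>\<eta>\<in>sphere c \<rho>. dist (\<Phi> x \<eta>) (\<Phi> x0 \<eta>) < e"
      unfolding eventually_at
    proof (intro exI[of _ "min d s"] conjI allI impI ballI)
      fix x \<eta> assume "x \<noteq> x0 \<and> dist x x0 < min d s" and "\<eta> \<in> sphere c \<rho>"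
      then show "dist (\<Phi> x \<eta>) (\<Phi> x0 \<eta>) < e"
        using d[of "(x0, \<eta>)" "(x, \<eta>)"] s by (auto simp: dist_Pair_Pair dist_commute)
    qed (use \<open>0 < d\<close> s in auto)
  qed
  moreover have "\<forall>\<^sub>F x in at x0. \<Phi> x contour_integrable_on circlepath c \<rho>"
    unfolding eventually_at using s
    by (intro exI[of _ s]) (auto intro!: contour_integrable_circlepath_param[OF cont \<rho>]
        simp: dist_commute)
  ultimately show "isCont (\<lambda>x. contour_integral (circlepath c \<rho>) (\<Phi> x)) x0"
    unfolding isCont_def using \<rho> by (intro contour_integral_uniform_limit_circlepath(2)) auto
qed

lemma continuous_on_vector_derivative_circlepath:
  "continuous_on {0..1} (\<lambda>t. vector_derivative (circlepath z r) (at t))"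
  by (simp add: vector_derivative_circlepath, intro continuous_intros)

lemma higher_deriv_eq_Cauchy_integral_cball:
  assumes "f holomorphic_on cball w \<rho>" "0 < \<rho>"
  shows "(\<lambda>u. f u / (u - w) ^ Suc k) contour_integrable_on circlepath w \<rho>"
    and "(deriv ^^ k) f w = fact k / (2 * complex_of_real pi * \<i>) *
      contour_integral (circlepath w \<rho>) (\<lambda>u. f u / (u - w) ^ Suc k)"
  using Cauchy_higher_derivative_integral_circlepath[OF holomorphic_on_imp_continuous_on[OF assms(1)]
      holomorphic_on_subset[OF assms(1) ball_subset_cball]] assms(2)
  by auto

lemma contour_integral_circlepath_param_Cauchy:
  fixes \<Phi> :: "complex \<Rightarrow> complex \<Rightarrow> complex"
  assumes cont: "continuous_on (S \<times> sphere c \<rho>) (\<lambda>(x, \<eta>). \<Phi> x \<eta>)" and \<rho>: "0 < \<rho>"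
    and hol: "\<And>\<eta>. \<eta> \<in> sphere c \<rho> \<Longrightarrow> (\<lambda>x. \<Phi> x \<eta>) holomorphic_on S"
    and s: "0 < s" "cball x0 s \<subseteq> S" and x: "x \<in> ball x0 s"
  shows "2 * complex_of_real pi * \<i> * contour_integral (circlepath c \<rho>) (\<Phi> x) =
    contour_integral (circlepath x0 s) (\<lambda>\<xi>. contour_integral (circlepath c \<rho>) (\<Phi> \<xi>) / (\<xi> - x))"
proof -
  have sphere_S: "sphere x0 s \<subseteq> S" using s by auto
  have int: "\<Phi> \<xi> contour_integrable_on circlepath c \<rho>" if "\<xi> \<in> S" for \<xi>
    by (rule contour_integrable_circlepath_param[OF cont \<rho> that])
  have Cauchy: "contour_integral (circlepath x0 s) (\<lambda>\<xi>. \<Phi> \<xi> \<eta> / (\<xi> - x)) =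
      2 * complex_of_real pi * \<i> * \<Phi> x \<eta>"
    if "\<eta> \<in> sphere c \<rho>" for \<eta>
  proof (rule contour_integral_unique, rule Cauchy_integral_circlepath)
    show "continuous_on (cball x0 s) (\<lambda>\<xi>. \<Phi> \<xi> \<eta>)"
      using holomorphic_on_imp_continuous_on[OF hol[OF that]] s continuous_on_subset by blast
    show "(\<lambda>\<xi>. \<Phi> \<xi> \<eta>) holomorphic_on ball x0 s"
      using hol[OF that] s by (meson ball_subset_cball holomorphic_on_subset order_trans)
  qed (use x in \<open>simp add: dist_norm norm_minus_commute\<close>)
  have "2 * complex_of_real pi * \<i> * contour_integral (circlepath c \<rho>) (\<Phi> x) =
      contour_integral (circlepath c \<rho>) (\<lambda>\<eta>. 2 * complex_of_real pi * \<i> * \<Phi> x \<eta>)"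
  proof -
    have "x \<in> S" using x s by auto
    then show ?thesis using int by (subst contour_integral_lmul) auto
  qed
  also have "\<dots> = contour_integral (circlepath c \<rho>)
      (\<lambda>\<eta>. contour_integral (circlepath x0 s) (\<lambda>\<xi>. \<Phi> \<xi> \<eta> / (\<xi> - x)))"
    by (rule contour_integral_cong) (use Cauchy \<rho> in \<open>auto simp: path_image_circlepath_nonneg\<close>)
  also have "\<dots> = contour_integral (circlepath x0 s)
      (\<lambda>\<xi>. contour_integral (circlepath c \<rho>) (\<lambda>\<eta>. \<Phi> \<xi> \<eta> / (\<xi> - x)))"
  proof (rule contour_integral_swap[symmetric, where f = "\<lambda>\<xi> \<eta>. \<Phi> \<xi> \<eta> / (\<xi> - x)"])
    have "continuous_on (sphere x0 s \<times> sphere c \<rho>) (\<lambda>p. (\<lambda>(x, \<eta>). \<Phi> x \<eta>) p / (fst p - x))"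
      using x sphere_S by (intro continuous_intros continuous_on_subset[OF cont]) (auto simp: dist_norm)
    then show "continuous_on (path_image (circlepath x0 s) \<times> path_image (circlepath c \<rho>))
        (\<lambda>(\<xi>, \<eta>). \<Phi> \<xi> \<eta> / (\<xi> - x))"
      using s \<rho> by (simp add: case_prod_unfold path_image_circlepath_nonneg)
  qed (simp_all add: continuous_on_vector_derivative_circlepath)
  also have "\<dots> = contour_integral (circlepath x0 s)
      (\<lambda>\<xi>. contour_integral (circlepath c \<rho>) (\<Phi> \<xi>) / (\<xi> - x))"
    by (rule contour_integral_cong)
       (use sphere_S int s in \<open>auto simp: path_image_circlepath_nonneg intro!: contour_integral_div\<close>)
  finally show ?thesis .
qed

lemma holomorphic_on_contour_integral_circlepath_param:
  fixes \<Phi> :: "complex \<Rightarrow> complex \<Rightarrow> complex"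
  assumes S: "open S" and cont: "continuous_on (S \<times> sphere c \<rho>) (\<lambda>(x, \<eta>). \<Phi> x \<eta>)"
    and \<rho>: "0 < \<rho>" and hol: "\<And>\<eta>. \<eta> \<in> sphere c \<rho> \<Longrightarrow> (\<lambda>x. \<Phi> x \<eta>) holomorphic_on S"
  shows "(\<lambda>x. contour_integral (circlepath c \<rho>) (\<Phi> x)) holomorphic_on S"
  unfolding holomorphic_on_open[OF S]
proof
  define H where "H = (\<lambda>x. contour_integral (circlepath c \<rho>) (\<Phi> x))"
  fix x0 assume "x0 \<in> S"
  then obtain s where s: "0 < s" "cball x0 s \<subseteq> S" using open_contains_cball S by blast
  have cont_H: "continuous_on (sphere x0 s) H"
    unfolding H_def
    by (rule continuous_on_subset[OF continuous_on_contour_integral_circlepath_param[OF S cont \<rho>]])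
       (use s in auto)
  define g where "g = (\<lambda>x. contour_integral (circlepath x0 s) (\<lambda>\<xi>. H \<xi> / (\<xi> - x)))"
  \<comment> \<open>H is reproduced by its own Cauchy integral, which is holomorphic inside the circle.\<close>
  have "((\<lambda>\<xi>. H \<xi> / (\<xi> - x) ^ 1) has_contour_integral g x) (circlepath x0 s)" if "x \<in> ball x0 s" for x
  proof -
    have "continuous_on (sphere x0 s) (\<lambda>\<xi>. H \<xi> / (\<xi> - x))"
      using that by (intro continuous_intros cont_H) (auto simp: dist_norm)
    then show ?thesis
      unfolding g_def using s
      by (auto intro!: has_contour_integral_integral contour_integrable_continuous_circlepath
          simp: path_image_circlepath_nonneg)
  qed
  then obtain g' where "(g has_field_derivative g') (at x0)"
    using Cauchy_next_derivative_circlepath(2)[where z = x0 and r = s and f = H and g = g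
        and k = 1 and w = x0] cont_H s
    by (auto simp: path_image_circlepath_nonneg)
  then have deriv_g: "((\<lambda>x. g x / (2 * complex_of_real pi * \<i>)) has_field_derivative
      g' / (2 * complex_of_real pi * \<i>)) (at x0)"
    by (auto intro!: derivative_eq_intros)
  have g_eq_H: "g x / (2 * complex_of_real pi * \<i>) = H x" if "x \<in> ball x0 s" for x
    using contour_integral_circlepath_param_Cauchy[OF cont \<rho> hol s that]
    unfolding H_def g_def by (simp add: field_simps)
  have "(H has_field_derivative g' / (2 * complex_of_real pi * \<i>)) (at x0)"
    by (rule has_field_derivative_transform_within_open[OF deriv_g open_ball]) (use s g_eq_H in auto)
  then show "\<exists>f'. (H has_field_derivative f') (at x0)" by blast
qed

section \<open>Separately holomorphic functions on the bidisc\<close>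

lemma bidisc_eq_Times: "bidisc = ball 0 1 \<times> ball 0 1"
  by (auto simp: bidisc_def)

lemma mem_bidisc [simp]: "(u, w) \<in> bidisc \<longleftrightarrow> norm u < 1 \<and> norm w < 1"
  by (simp add: bidisc_def)

lemma polydisc_eq_Times: "polydisc z0 R = cball (fst z0) (fst R) \<times> cball (snd z0) (snd R)"
  by (auto simp: polydisc_def dist_norm norm_minus_commute)

lemma analytic_bidisc_holomorphic_fst:
  "analytic_bidisc F \<Longrightarrow> norm w < 1 \<Longrightarrow> (\<lambda>u. F (u, w)) holomorphic_on ball 0 1"
  by (simp add: analytic_bidisc_def)

lemma analytic_bidisc_holomorphic_snd:
  "analytic_bidisc F \<Longrightarrow> norm u < 1 \<Longrightarrow> (\<lambda>w. F (u, w)) holomorphic_on ball 0 1"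
  by (simp add: analytic_bidisc_def)

lemma analytic_bidisc_continuous_on_Times:
  assumes "analytic_bidisc F" "A \<subseteq> ball 0 1" "B \<subseteq> ball 0 1"
  shows "continuous_on (A \<times> B) (\<lambda>(x, y). F (x, y))"
proof -
  have "A \<times> B \<subseteq> bidisc" using assms(2,3) by (auto simp: bidisc_eq_Times)
  then show ?thesis
    using assms(1) unfolding analytic_bidisc_def
    by (auto simp: case_prod_beta' elim: continuous_on_subset)
qed

lemma analytic_bidisc_swap:
  assumes "analytic_bidisc F"
  shows "analytic_bidisc (\<lambda>z. F (snd z, fst z))"
proof -
  have "continuous_on bidisc (F \<circ> (\<lambda>z. (snd z, fst z)))"
    using assms unfolding analytic_bidisc_def
    by (intro continuous_on_compose continuous_intros)
       (auto elim!: continuous_on_subset simp: bidisc_def)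
  then show ?thesis using assms unfolding analytic_bidisc_def by (simp add: o_def)
qed

lemma holomorphic_on_higher_deriv_snd:
  assumes F: "analytic_bidisc F" and w: "norm w < 1"
  shows "(\<lambda>x. (deriv ^^ q) (\<lambda>y. F (x, y)) w) holomorphic_on ball 0 1"
proof -
  define \<rho> where "\<rho> = (1 - norm w) / 2"
  have \<rho>: "0 < \<rho>" "cball w \<rho> \<subseteq> ball 0 1"
    using w by (auto simp: \<rho>_def cball_subset_ball_iff field_simps)
  define \<Phi> where "\<Phi> = (\<lambda>x \<eta>. F (x, \<eta>) / (\<eta> - w) ^ Suc q)"
  have "continuous_on (ball 0 1 \<times> sphere w \<rho>) (\<lambda>p. (\<lambda>(x, y). F (x, y)) p / (snd p - w) ^ Suc q)"
    using \<rho> by (intro continuous_intros analytic_bidisc_continuous_on_Times[OF F]) auto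
  then have "continuous_on (ball 0 1 \<times> sphere w \<rho>) (\<lambda>(x, \<eta>). \<Phi> x \<eta>)"
    by (simp add: \<Phi>_def case_prod_unfold)
  moreover have "(\<lambda>x. \<Phi> x \<eta>) holomorphic_on ball 0 1" if "\<eta> \<in> sphere w \<rho>" for \<eta>
    unfolding \<Phi>_def using that \<rho>
    by (intro holomorphic_intros analytic_bidisc_holomorphic_fst[OF F]) auto
  ultimately have "(\<lambda>x. fact q / (2 * complex_of_real pi * \<i>) *
      contour_integral (circlepath w \<rho>) (\<Phi> x)) holomorphic_on ball 0 1"
    using \<rho> by (intro holomorphic_intros holomorphic_on_contour_integral_circlepath_param) auto
  moreover have "fact q / (2 * complex_of_real pi * \<i>) * contour_integral (circlepath w \<rho>) (\<Phi> x)
      = (deriv ^^ q) (\<lambda>y. F (x, y)) w" if "x \<in> ball 0 1" for x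
  proof -
    have "(\<lambda>y. F (x, y)) holomorphic_on cball w \<rho>"
      using analytic_bidisc_holomorphic_snd[OF F] that holomorphic_on_subset[OF _ \<rho>(2)] by simp
    then show ?thesis
      unfolding \<Phi>_def using higher_deriv_eq_Cauchy_integral_cball(2) \<rho>(1) by simp
  qed
  ultimately show ?thesis by (rule holomorphic_transform)
qed

lemma analytic_bidisc_continuous_on_Cauchy_kernel:
  assumes F: "analytic_bidisc F" and "A \<subseteq> ball 0 1" "u \<notin> A" "B \<subseteq> ball 0 1" "w \<notin> B"
  shows "continuous_on (A \<times> B) (\<lambda>(\<xi>, \<eta>). F (\<xi>, \<eta>) / ((\<xi> - u) ^ Suc p * (\<eta> - w) ^ Suc q))"
proof -
  have "continuous_on (A \<times> B)
      (\<lambda>z. (\<lambda>(x, y). F (x, y)) z / ((fst z - u) ^ Suc p * (snd z - w) ^ Suc q))"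
    using assms by (intro continuous_intros analytic_bidisc_continuous_on_Times[OF F]) auto
  then show ?thesis by (simp add: case_prod_unfold)
qed

lemma pderiv2_eq_iterated_contour_integral:
  assumes F: "analytic_bidisc F"
    and \<rho>1: "0 < \<rho>1" "cball u \<rho>1 \<subseteq> ball 0 1" and \<rho>2: "0 < \<rho>2" "cball w \<rho>2 \<subseteq> ball 0 1"
  shows "pderiv2 F p q (u, w) = fact p * fact q / (2 * complex_of_real pi * \<i>)\<^sup>2 *
    contour_integral (circlepath u \<rho>1) (\<lambda>\<xi>. contour_integral (circlepath w \<rho>2)
      (\<lambda>\<eta>. F (\<xi>, \<eta>) / ((\<xi> - u) ^ Suc p * (\<eta> - w) ^ Suc q)))"
proof -
  define c where "c = 2 * complex_of_real pi * \<i>"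
  define G where "G = (\<lambda>x. (deriv ^^ q) (\<lambda>y. F (x, y)) w)"
  define I where "I = (\<lambda>\<xi>. contour_integral (circlepath w \<rho>2)
    (\<lambda>\<eta>. F (\<xi>, \<eta>) / ((\<xi> - u) ^ Suc p * (\<eta> - w) ^ Suc q)))"
  have "norm w < 1" using \<rho>2 by (meson centre_in_cball less_imp_le mem_ball_0 subsetD)
  then have G: "G holomorphic_on cball u \<rho>1"
    unfolding G_def using holomorphic_on_higher_deriv_snd[OF F] holomorphic_on_subset \<rho>1(2) by blast
  have G_eq_I: "G \<xi> / (\<xi> - u) ^ Suc p = fact q / c * I \<xi>" if "\<xi> \<in> sphere u \<rho>1" for \<xi>
  proof -
    have "norm \<xi> < 1" "\<xi> \<noteq> u" using that \<rho>1 by auto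
    then have hol: "(\<lambda>y. F (\<xi>, y)) holomorphic_on cball w \<rho>2"
      using analytic_bidisc_holomorphic_snd[OF F] holomorphic_on_subset[OF _ \<rho>2(2)] by simp
    note Cauchy = higher_deriv_eq_Cauchy_integral_cball[OF hol \<rho>2(1), of q]
    have "I \<xi> = contour_integral (circlepath w \<rho>2) (\<lambda>\<eta>. F (\<xi>, \<eta>) / (\<eta> - w) ^ Suc q / (\<xi> - u) ^ Suc p)"
      unfolding I_def by (rule contour_integral_cong) (simp_all add: mult.commute)
    also have "\<dots> = contour_integral (circlepath w \<rho>2) (\<lambda>\<eta>. F (\<xi>, \<eta>) / (\<eta> - w) ^ Suc q) / (\<xi> - u) ^ Suc p"
      using Cauchy(1) by (rule contour_integral_div)
    finally show ?thesis
      using Cauchy(2) by (simp add: G_def c_def)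
  qed
  have "continuous_on (ball 0 1 - {u}) I"
    unfolding I_def using \<rho>2
    by (intro continuous_on_contour_integral_circlepath_param
        analytic_bidisc_continuous_on_Cauchy_kernel[OF F])
       auto
  then have I_integrable: "I contour_integrable_on circlepath u \<rho>1"
    using \<rho>1 by (intro contour_integrable_continuous_circlepath)
       (auto simp: path_image_circlepath_nonneg elim!: continuous_on_subset)
  have "pderiv2 F p q (u, w) = (deriv ^^ p) G u" by (simp add: pderiv2_def G_def)
  also have "\<dots> = fact p / c * contour_integral (circlepath u \<rho>1) (\<lambda>\<xi>. G \<xi> / (\<xi> - u) ^ Suc p)"
    using higher_deriv_eq_Cauchy_integral_cball(2)[OF G \<rho>1(1)] by (simp add: c_def)
  also have "contour_integral (circlepath u \<rho>1) (\<lambda>\<xi>. G \<xi> / (\<xi> - u) ^ Suc p) =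
      contour_integral (circlepath u \<rho>1) (\<lambda>\<xi>. fact q / c * I \<xi>)"
    using G_eq_I \<rho>1 by (intro contour_integral_cong) (auto simp: path_image_circlepath_nonneg)
  also have "\<dots> = fact q / c * contour_integral (circlepath u \<rho>1) I"
    by (rule contour_integral_lmul[OF I_integrable])
  finally show ?thesis by (simp add: c_def I_def power2_eq_square)
qed

lemma pderiv2_swap:
  assumes F: "analytic_bidisc F" and "norm u < 1" "norm w < 1"
  shows "pderiv2 F p q (u, w) = pderiv2 (\<lambda>z. F (snd z, fst z)) q p (w, u)"
proof -
  define \<rho>1 where "\<rho>1 = (1 - norm u) / 2"
  define \<rho>2 where "\<rho>2 = (1 - norm w) / 2"
  have \<rho>1: "0 < \<rho>1" "cball u \<rho>1 \<subseteq> ball 0 1" and \<rho>2: "0 < \<rho>2" "cball w \<rho>2 \<subseteq> ball 0 1"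
    using assms by (auto simp: \<rho>1_def \<rho>2_def cball_subset_ball_iff field_simps)
  define K where "K = (\<lambda>\<xi> \<eta>. F (\<xi>, \<eta>) / ((\<xi> - u) ^ Suc p * (\<eta> - w) ^ Suc q))"
  have "contour_integral (circlepath u \<rho>1) (\<lambda>\<xi>. contour_integral (circlepath w \<rho>2) (K \<xi>)) =
      contour_integral (circlepath w \<rho>2) (\<lambda>\<eta>. contour_integral (circlepath u \<rho>1) (\<lambda>\<xi>. K \<xi> \<eta>))"
  proof (rule contour_integral_swap)
    show "continuous_on (path_image (circlepath u \<rho>1) \<times> path_image (circlepath w \<rho>2)) (\<lambda>(\<xi>, \<eta>). K \<xi> \<eta>)"
      unfolding K_def using \<rho>1 \<rho>2 sphere_cball[of u \<rho>1] sphere_cball[of w \<rho>2]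
      by (simp only: path_image_circlepath_nonneg less_imp_le)
         (rule analytic_bidisc_continuous_on_Cauchy_kernel[OF F]; force)
  qed (simp_all add: continuous_on_vector_derivative_circlepath)
  then show ?thesis
    using pderiv2_eq_iterated_contour_integral[OF F \<rho>1 \<rho>2, of p q]
      pderiv2_eq_iterated_contour_integral[OF analytic_bidisc_swap[OF F] \<rho>2 \<rho>1, of q p]
    by (simp add: K_def mult.commute)
qed

lemma pderiv2_sums_fst:
  assumes F: "analytic_bidisc F" and w: "norm w < 1" and h: "norm (u' - u) < 1 - norm u"
  shows "(\<lambda>j. pderiv2 F (k + j) m (u, w) / fact j * (u' - u) ^ j) sums pderiv2 F k m (u', w)"
proof -
  define G where "G = (\<lambda>x. (deriv ^^ m) (\<lambda>y. F (x, y)) w)"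
  have "ball u (1 - norm u) \<subseteq> ball 0 1" by (simp add: ball_subset_ball_iff)
  then have "(deriv ^^ k) G holomorphic_on ball u (1 - norm u)"
    unfolding G_def using holomorphic_on_higher_deriv_snd[OF F w]
    by (intro holomorphic_on_subset[OF holomorphic_higher_deriv]) auto
  then have "(\<lambda>j. (deriv ^^ j) ((deriv ^^ k) G) u / fact j * (u' - u) ^ j) sums (deriv ^^ k) G u'"
    by (rule holomorphic_power_series) (use h in \<open>simp add: dist_norm norm_minus_commute\<close>)
  moreover have "(deriv ^^ j) ((deriv ^^ k) G) = (deriv ^^ (k + j)) G" for j
    by (simp only: add.commute[of k j] funpow_add o_apply)
  ultimately show ?thesis by (simp add: pderiv2_def G_def)
qed

lemma pderiv2_sums_snd:
  assumes F: "analytic_bidisc F" and u: "norm u < 1" and h: "norm (w' - w) < 1 - norm w"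
  shows "(\<lambda>j. pderiv2 F k (m + j) (u, w) / fact j * (w' - w) ^ j) sums pderiv2 F k m (u, w')"
proof -
  have "norm w < 1" "norm w' < 1"
    using h norm_triangle_ineq2[of w' w] norm_ge_zero[of "w' - w"] by linarith+
  then show ?thesis
    using pderiv2_sums_fst[OF analytic_bidisc_swap[OF F] u h, of m k]
    by (simp add: pderiv2_swap[OF F u])
qed

lemma norm_pderiv2_le_Cauchy:
  assumes F: "analytic_bidisc F" and \<rho>: "0 < \<rho>1" "0 < \<rho>2"
    and sub: "polydisc (a, b) (\<rho>1, \<rho>2) \<subseteq> bidisc"
    and bound: "\<And>z. z \<in> polydisc (a, b) (\<rho>1, \<rho>2) \<Longrightarrow> norm (F z) \<le> V"
  shows "norm (pderiv2 F p q (a, b)) \<le> fact p * fact q * V / (\<rho>1 ^ p * \<rho>2 ^ q)"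
proof -
  have cb: "cball a \<rho>1 \<subseteq> ball 0 1" "cball b \<rho>2 \<subseteq> ball 0 1"
    using sub \<rho> by (auto simp: polydisc_eq_Times bidisc_eq_Times times_subset_iff)
  then have "norm b < 1" using \<rho> by (meson centre_in_cball less_imp_le mem_ball_0 subsetD)
  define G where "G = (\<lambda>x. (deriv ^^ q) (\<lambda>y. F (x, y)) b)"
  have G: "G holomorphic_on cball a \<rho>1"
    unfolding G_def using holomorphic_on_higher_deriv_snd[OF F \<open>norm b < 1\<close>] holomorphic_on_subset cb
    by blast
  have "norm (G \<xi>) \<le> fact q * V / \<rho>2 ^ q" if "norm (a - \<xi>) = \<rho>1" for \<xi>
  proof -
    have "norm \<xi> < 1" using that cb by (auto simp: dist_norm subset_iff)
    then have hol: "(\<lambda>y. F (\<xi>, y)) holomorphic_on cball b \<rho>2"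
      using analytic_bidisc_holomorphic_snd[OF F] holomorphic_on_subset[OF _ cb(2)] by simp
    show ?thesis unfolding G_def
    proof (rule Cauchy_inequality[OF holomorphic_on_subset[OF hol ball_subset_cball]
          holomorphic_on_imp_continuous_on[OF hol] \<rho>(2)])
      fix y assume "norm (b - y) = \<rho>2"
      then show "norm (F (\<xi>, y)) \<le> V"
        using that by (intro bound) (simp add: polydisc_def norm_minus_commute)
    qed
  qed
  then have "norm ((deriv ^^ p) G a) \<le> fact p * (fact q * V / \<rho>2 ^ q) / \<rho>1 ^ p"
    by (intro Cauchy_inequality[OF holomorphic_on_subset[OF G ball_subset_cball]
          holomorphic_on_imp_continuous_on[OF G] \<rho>(1)])
  then show ?thesis by (simp add: pderiv2_def G_def field_simps)
qed

lemma norm_sums_le_of_taylor_coeff_bound: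
  fixes a :: "nat \<Rightarrow> complex"
  assumes sums: "a sums S"
    and bound: "\<And>j. norm (a j) \<le> fact (k + j) / fact j * B * L ^ (k + j) * d ^ j"
    and "0 \<le> d" "4 * L * d \<le> 1" "0 < L" "0 \<le> B"
  shows "norm S \<le> 2 ^ (k + 1) * (fact k * B * L ^ k)"
proof -
  define A where "A = fact k * B * L ^ k * 2 ^ k"
  \<comment> \<open>(k+j)!/(k! j!) \<le> 2^(k+j) and (Ld)^j \<le> 4^-j, so the terms decay like 2^-j.\<close>
  have geometric: "norm (a j) \<le> A * (1 / 2) ^ j" for j
  proof -
    have "fact (k + j) / fact j = (fact k * real ((k + j) choose j) :: real)"
      using binomial_fact[of j "k + j", where 'a = real] by (simp add: field_simps)
    moreover have "L ^ (k + j) * d ^ j = L ^ k * (L * d) ^ j"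
      by (simp add: power_add power_mult_distrib)
    ultimately have "norm (a j) \<le> fact k * real ((k + j) choose j) * B * (L ^ k * (L * d) ^ j)"
      using bound[of j] by (simp add: mult.assoc)
    also have "\<dots> \<le> fact k * 2 ^ (k + j) * B * (L ^ k * (1 / 4) ^ j)"
    proof -
      have "real ((k + j) choose j) \<le> 2 ^ (k + j)"
        using binomial_le_pow2[of "k + j" j] by (metis of_nat_le_iff of_nat_numeral of_nat_power)
      moreover have "(L * d) ^ j \<le> (1 / 4) ^ j"
        using assms by (intro power_mono) auto
      ultimately show ?thesis
        using assms by (intro mult_mono mult_left_mono) auto
    qed
    also have "\<dots> = A * (1 / 2) ^ j"
    proof -
      have "(2::real) ^ j * 2 ^ j = 4 ^ j"
        by (metis power_mult_distrib num_double numeral_times_numeral)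
      then show ?thesis by (simp add: A_def power_add field_simps power_divide)
    qed
    finally show ?thesis .
  qed
  have summable: "summable (\<lambda>j. A * (1 / 2 :: real) ^ j)"
    by (intro summable_mult summable_geometric) simp
  have "summable (\<lambda>j. norm (a j))"
    by (rule summable_comparison_test[OF _ summable]) (use geometric in auto)
  then have "norm S \<le> (\<Sum>j. norm (a j))"
    using sums by (metis sums_unique summable_norm)
  also have "\<dots> \<le> (\<Sum>j. A * (1 / 2) ^ j)"
    by (rule suminf_le[OF geometric \<open>summable (\<lambda>j. norm (a j))\<close> summable])
  also have "\<dots> = A * 2" by (simp add: suminf_mult suminf_geometric)
  finally show ?thesis by (simp add: A_def mult_ac)
qed

lemma norm_pderiv2_le_after_step_fst:
  assumes F: "analytic_bidisc F" and w: "norm w < 1"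
    and h: "norm (u' - u) < 1 - norm u" "4 * L1 * norm (u' - u) \<le> 1"
    and L: "0 < L1" "0 \<le> L2" and M: "0 \<le> M"
    and bound: "\<And>p q. norm (pderiv2 F p q (u, w)) \<le> fact p * fact q * L1 ^ p * L2 ^ q * M"
  shows "norm (pderiv2 F k1 k2 (u', w)) \<le> 2 ^ (k1 + 1) * (fact k1 * fact k2 * L1 ^ k1 * L2 ^ k2 * M)"
proof -
  have "norm (pderiv2 F (k1 + j) k2 (u, w) / fact j * (u' - u) ^ j) \<le>
      fact (k1 + j) / fact j * (fact k2 * L2 ^ k2 * M) * L1 ^ (k1 + j) * norm (u' - u) ^ j" for j
    using mult_right_mono[OF divide_right_mono[OF bound[of "k1 + j" k2], of "fact j"],
        of "norm (u' - u) ^ j"]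
    by (simp add: norm_mult norm_divide norm_power field_simps)
  then have "norm (pderiv2 F k1 k2 (u', w)) \<le> 2 ^ (k1 + 1) * (fact k1 * (fact k2 * L2 ^ k2 * M) * L1 ^ k1)"
    using L M h by (intro norm_sums_le_of_taylor_coeff_bound[OF pderiv2_sums_fst[OF F w h(1)]]) auto
  then show ?thesis by (simp add: mult_ac)
qed

lemma norm_pderiv2_le_after_step_snd:
  assumes F: "analytic_bidisc F" and u: "norm u < 1"
    and h: "norm (w' - w) < 1 - norm w" "4 * L2 * norm (w' - w) \<le> 1"
    and L: "0 \<le> L1" "0 < L2" and M: "0 \<le> M"
    and bound: "\<And>p q. norm (pderiv2 F p q (u, w)) \<le> fact p * fact q * L1 ^ p * L2 ^ q * M"
  shows "norm (pderiv2 F k1 k2 (u, w')) \<le> 2 ^ (k2 + 1) * (fact k1 * fact k2 * L1 ^ k1 * L2 ^ k2 * M)"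
proof -
  have "norm w < 1" "norm w' < 1"
    using h norm_triangle_ineq2[of w' w] norm_ge_zero[of "w' - w"] by linarith+
  note swap = pderiv2_swap[OF F u]
  have "norm (pderiv2 (\<lambda>z. F (snd z, fst z)) k2 k1 (w', u)) \<le>
      2 ^ (k2 + 1) * (fact k2 * fact k1 * L2 ^ k2 * L1 ^ k1 * M)"
  proof (rule norm_pderiv2_le_after_step_fst[OF analytic_bidisc_swap[OF F] u h L(2,1) M])
    fix p q
    show "norm (pderiv2 (\<lambda>z. F (snd z, fst z)) p q (w, u)) \<le> fact p * fact q * L2 ^ p * L1 ^ q * M"
      using bound[of q p] by (simp add: swap[OF \<open>norm w < 1\<close>] mult_ac)
  qed
  then show ?thesis by (simp add: swap[OF \<open>norm w' < 1\<close>] mult_ac)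
qed

section \<open>Bounded L-index\<close>

definition nterm_max :: "(complex \<times> complex \<Rightarrow> complex) \<Rightarrow> (complex \<times> complex \<Rightarrow> real)
    \<Rightarrow> (complex \<times> complex \<Rightarrow> real) \<Rightarrow> nat \<Rightarrow> complex \<times> complex \<Rightarrow> real" where
  "nterm_max F l1 l2 N z = Max {nterm F l1 l2 k1 k2 z | k1 k2. k1 + k2 \<le> N}"

lemma finite_image_bounded_sum_pairs: "finite {f k1 k2 | k1 k2. k1 + k2 \<le> (N::nat)}"
proof (rule finite_subset)
  show "{f k1 k2 | k1 k2. k1 + k2 \<le> N} \<subseteq> (\<lambda>(k1, k2). f k1 k2) ` ({..N} \<times> {..N})"
    by (auto intro: rev_image_eqI)
qed simp

lemma nterm_le_nterm_max: "k1 + k2 \<le> N \<Longrightarrow> nterm F l1 l2 k1 k2 z \<le> nterm_max F l1 l2 N z"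
  unfolding nterm_max_def by (rule Max_ge[OF finite_image_bounded_sum_pairs]) blast

lemma nterm_max_attained: "\<exists>k1 k2. k1 + k2 \<le> N \<and> nterm_max F l1 l2 N z = nterm F l1 l2 k1 k2 z"
proof -
  have "nterm_max F l1 l2 N z \<in> {nterm F l1 l2 k1 k2 z | k1 k2. k1 + k2 \<le> N}"
    unfolding nterm_max_def
    by (rule Max_in[OF finite_image_bounded_sum_pairs]) (auto intro!: exI[of _ 0])
  then show ?thesis by blast
qed

lemma bounded_L_index_iff_nterm_max:
  "bounded_L_index F l1 l2 \<longleftrightarrow>
    (\<exists>N. \<forall>z\<in>bidisc. \<forall>p q. nterm F l1 l2 p q z \<le> nterm_max F l1 l2 N z)"
  by (simp add: bounded_L_index_def nterm_max_def)

lemma nterm_nonneg: "0 \<le> l1 z \<Longrightarrow> 0 \<le> l2 z \<Longrightarrow> 0 \<le> nterm F l1 l2 p q z"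
  by (simp add: nterm_def)

lemma nterm_max_nonneg: "0 \<le> l1 z \<Longrightarrow> 0 \<le> l2 z \<Longrightarrow> 0 \<le> nterm_max F l1 l2 N z"
  by (rule order.trans[OF nterm_nonneg nterm_le_nterm_max[of 0 0]]) auto

lemma norm_pderiv2_le_of_nterm_le:
  assumes "nterm F l1 l2 p q z \<le> M" "0 < l1 z" "0 < l2 z"
  shows "norm (pderiv2 F p q z) \<le> fact p * fact q * l1 z ^ p * l2 z ^ q * M"
  using assms by (simp add: nterm_def pos_divide_le_eq mult_ac)

lemma admissible_L_pos:
  assumes "admissible_L \<beta> l1 l2" "z \<in> bidisc"
  shows "0 < l1 z" "0 < l2 z"
proof -
  have "0 < \<beta> / (1 - norm (fst z))" "0 < \<beta> / (1 - norm (snd z))"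
    using assms by (auto simp: admissible_L_def bidisc_def)
  then show "0 < l1 z" "0 < l2 z"
    using assms unfolding admissible_L_def by (meson order.strict_trans)+
qed

lemma admissible_L_radius:
  assumes "admissible_L \<beta> l1 l2" "z \<in> bidisc"
  shows "\<beta> < l1 z * (1 - norm (fst z))" "\<beta> < l2 z * (1 - norm (snd z))"
proof -
  have "0 < 1 - norm (fst z)" "0 < 1 - norm (snd z)" using assms(2) by (auto simp: bidisc_def)
  moreover have "\<beta> / (1 - norm (fst z)) < l1 z" "\<beta> / (1 - norm (snd z)) < l2 z"
    using assms unfolding admissible_L_def by auto
  ultimately show "\<beta> < l1 z * (1 - norm (fst z))" "\<beta> < l2 z * (1 - norm (snd z))"
    by (simp_all add: pos_divide_less_eq)
qed

lemma polydisc_subset_bidisc: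
  assumes adm: "admissible_L \<beta> l1 l2" and z0: "z0 \<in> bidisc" and "r1 \<le> \<beta>" "r2 \<le> \<beta>"
  shows "polydisc z0 (r1 / l1 z0, r2 / l2 z0) \<subseteq> bidisc"
proof
  fix z assume z: "z \<in> polydisc z0 (r1 / l1 z0, r2 / l2 z0)"
  note l = admissible_L_pos[OF adm z0] and radius = admissible_L_radius[OF adm z0]
  have "r1 / l1 z0 < 1 - norm (fst z0)" "r2 / l2 z0 < 1 - norm (snd z0)"
    using l radius assms(3,4) by (simp_all add: pos_divide_less_eq mult.commute)
  moreover have "norm (fst z) \<le> norm (fst z0) + norm (fst z - fst z0)"
    "norm (snd z) \<le> norm (snd z0) + norm (snd z - snd z0)"
    by (simp_all add: norm_triangle_sub)
  ultimately show "z \<in> bidisc"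
    using z unfolding polydisc_def bidisc_def by simp
qed

lemma centre_in_polydisc: "0 \<le> r1 \<Longrightarrow> 0 \<le> r2 \<Longrightarrow> z0 \<in> polydisc z0 (r1, r2)"
  by (simp add: polydisc_def)

lemma admissible_L_step_inside:
  assumes adm: "admissible_L \<beta> l1 l2" and z: "z \<in> bidisc"
  shows "4 * l1 z * d \<le> 1 \<Longrightarrow> d < 1 - norm (fst z)"
    and "4 * l2 z * d \<le> 1 \<Longrightarrow> d < 1 - norm (snd z)"
proof -
  have "1 < \<beta>" using adm by (simp add: admissible_L_def)
  note l = admissible_L_pos[OF adm z] and radius = admissible_L_radius[OF adm z]
  have "0 < 1 - norm (fst z)" "0 < 1 - norm (snd z)" using z by (auto simp: bidisc_def)
  show "d < 1 - norm (fst z)" if "4 * l1 z * d \<le> 1"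
  proof -
    have "l1 z * (4 * d) < l1 z * (1 - norm (fst z))"
      using radius(1) that \<open>1 < \<beta>\<close> by (simp add: mult.assoc mult.left_commute)
    then show ?thesis using l \<open>0 < 1 - norm (fst z)\<close> by simp
  qed
  show "d < 1 - norm (snd z)" if "4 * l2 z * d \<le> 1"
  proof -
    have "l2 z * (4 * d) < l2 z * (1 - norm (snd z))"
      using radius(2) that \<open>1 < \<beta>\<close> by (simp add: mult.assoc mult.left_commute)
    then show ?thesis using l \<open>0 < 1 - norm (snd z)\<close> by simp
  qed
qed

lemma norm_pderiv2_le_after_axis_step:
  assumes adm: "admissible_L \<beta> l1 l2" and F: "analytic_bidisc F" and z: "z \<in> bidisc"
    and M: "0 \<le> M"
    and bound: "\<And>p q. norm (pderiv2 F p q z) \<le> fact p * fact q * l1 z ^ p * l2 z ^ q * M"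
    and axis: "(snd z' = snd z \<and> 4 * l1 z * norm (fst z' - fst z) \<le> 1) \<or>
               (fst z' = fst z \<and> 4 * l2 z * norm (snd z' - snd z) \<le> 1)"
  shows "norm (pderiv2 F k1 k2 z') \<le> 2 ^ (k1 + k2 + 1) * (fact k1 * fact k2 * l1 z ^ k1 * l2 z ^ k2 * M)"
proof -
  obtain u w u' w' where uw: "z = (u, w)" "z' = (u', w')" by (cases z, cases z')
  define D where "D = fact k1 * fact k2 * l1 z ^ k1 * l2 z ^ k2 * M"
  note l = admissible_L_pos[OF adm z] and step = admissible_L_step_inside[OF adm z]
  have "0 \<le> D" using l M by (simp add: D_def)
  then have le: "2 ^ (k + 1) * D \<le> 2 ^ (k1 + k2 + 1) * D" if "k \<le> k1 + k2" for k
    using that by (intro mult_right_mono power_increasing) auto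
  from axis consider "w' = w" "4 * l1 z * norm (u' - u) \<le> 1" | "u' = u" "4 * l2 z * norm (w' - w) \<le> 1"
    using uw by auto
  then show ?thesis
  proof cases
    case 1
    have "norm (u' - u) < 1 - norm u" using step(1)[OF 1(2)] uw by simp
    then have "norm (pderiv2 F k1 k2 z') \<le> 2 ^ (k1 + 1) * D"
      using norm_pderiv2_le_after_step_fst[OF F _ _ 1(2) l(1) _ M] bound 1 z uw l
      by (simp add: D_def less_imp_le)
    then show ?thesis using le[of k1] unfolding D_def[symmetric] by linarith
  next
    case 2
    have "norm (w' - w) < 1 - norm w" using step(2)[OF 2(2)] uw by simp
    then have "norm (pderiv2 F k1 k2 z') \<le> 2 ^ (k2 + 1) * D"
      using norm_pderiv2_le_after_step_snd[OF F _ _ 2(2) _ l(2) M] bound 2 z uw l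
      by (simp add: D_def less_imp_le)
    then show ?thesis using le[of k2] unfolding D_def[symmetric] by linarith
  qed
qed

lemma nterm_max_step:
  assumes adm: "admissible_L \<beta> l1 l2" and F: "analytic_bidisc F"
    and index: "\<And>v p q. v \<in> bidisc \<Longrightarrow> nterm F l1 l2 p q v \<le> nterm_max F l1 l2 N v"
    and z: "z \<in> bidisc" and z': "z' \<in> bidisc"
    and \<Lambda>: "1 \<le> \<Lambda>" "l1 z \<le> \<Lambda> * l1 z'" "l2 z \<le> \<Lambda> * l2 z'"
    and axis: "(snd z' = snd z \<and> 4 * l1 z * norm (fst z' - fst z) \<le> 1) \<or>
               (fst z' = fst z \<and> 4 * l2 z * norm (snd z' - snd z) \<le> 1)"
  shows "nterm_max F l1 l2 N z' \<le> 2 ^ (N + 1) * \<Lambda> ^ N * nterm_max F l1 l2 N z"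
proof -
  define M where "M = nterm_max F l1 l2 N z"
  obtain k1 k2 where k: "k1 + k2 \<le> N" and max': "nterm_max F l1 l2 N z' = nterm F l1 l2 k1 k2 z'"
    using nterm_max_attained by blast
  note l = admissible_L_pos[OF adm z] and l' = admissible_L_pos[OF adm z']
  have M: "0 \<le> M" unfolding M_def using l by (intro nterm_max_nonneg) auto
  define D where "D = fact k1 * fact k2 * l1 z ^ k1 * l2 z ^ k2 * M"
  have "norm (pderiv2 F k1 k2 z') \<le> 2 ^ (k1 + k2 + 1) * D"
    unfolding D_def using index[OF z] l
    by (intro norm_pderiv2_le_after_axis_step[OF adm F z M _ axis] norm_pderiv2_le_of_nterm_le)
       (auto simp: M_def)
  also have "\<dots> \<le> 2 ^ (N + 1) * D"
    using k l M by (intro mult_right_mono power_increasing) (auto simp: D_def)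
  also have "\<dots> \<le> (2 ^ (N + 1) * \<Lambda> ^ N * M) * (fact k1 * fact k2 * l1 z' ^ k1 * l2 z' ^ k2)"
  proof -
    have "l1 z ^ k1 * l2 z ^ k2 \<le> (\<Lambda> * l1 z') ^ k1 * (\<Lambda> * l2 z') ^ k2"
      using l \<Lambda> by (intro mult_mono power_mono) auto
    also have "\<dots> = \<Lambda> ^ (k1 + k2) * (l1 z' ^ k1 * l2 z' ^ k2)"
      by (simp add: power_mult_distrib power_add)
    also have "\<dots> \<le> \<Lambda> ^ N * (l1 z' ^ k1 * l2 z' ^ k2)"
      using k \<Lambda> l' by (intro mult_right_mono power_increasing) auto
    finally have "l1 z ^ k1 * l2 z ^ k2 * (fact k1 * fact k2 * M) \<le>
        \<Lambda> ^ N * (l1 z' ^ k1 * l2 z' ^ k2) * (fact k1 * fact k2 * M)"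
      using M by (intro mult_right_mono) auto
    then have "D \<le> \<Lambda> ^ N * (fact k1 * fact k2 * l1 z' ^ k1 * l2 z' ^ k2) * M"
      by (simp add: D_def mult_ac)
    then show ?thesis
      using mult_left_mono[of D _ "2 ^ (N + 1)"] by (simp add: mult_ac)
  qed
  finally show ?thesis
    using l' by (simp add: max' M_def nterm_def pos_divide_le_eq)
qed

definition dominated_on_polydiscs :: "(complex \<times> complex \<Rightarrow> complex) \<Rightarrow> (complex \<times> complex \<Rightarrow> real)
    \<Rightarrow> (complex \<times> complex \<Rightarrow> real) \<Rightarrow> real \<Rightarrow> real \<Rightarrow> bool" where
  "dominated_on_polydiscs F l1 l2 r1 r2 \<longleftrightarrow>
    (\<exists>n0::nat. \<exists>p0::real. p0 > 0 \<and>
      (\<forall>z0\<in>bidisc. \<exists>k01 k02. k01 + k02 \<le> n0 \<and>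
        (\<forall>k1 k2 z. k1 + k2 \<le> n0 \<and> z \<in> polydisc z0 (r1 / l1 z0, r2 / l2 z0) \<longrightarrow>
           nterm F l1 l2 k1 k2 z \<le> p0 * nterm F l1 l2 k01 k02 z0)))"

lemma nterm_0_0: "nterm F l1 l2 0 0 z = norm (F z)"
  by (simp add: nterm_def pderiv2_def)

lemma scaled_nterm_eq:
  "p0 / (fact k1 * fact k2) * (norm (pderiv2 F k1 k2 z) / (l1 z ^ k1 * l2 z ^ k2)) =
    p0 * nterm F l1 l2 k1 k2 z"
  unfolding nterm_def by (simp add: divide_divide_eq_left mult.assoc)

lemma nterm_le_of_polydisc_bound:
  assumes adm: "admissible_L \<beta> l1 l2" and F: "analytic_bidisc F" and z: "z \<in> bidisc"
    and bound: "\<And>z'. z' \<in> polydisc z (\<beta> / l1 z, \<beta> / l2 z) \<Longrightarrow> norm (F z') \<le> V"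
  shows "nterm F l1 l2 p q z \<le> V / \<beta> ^ (p + q)"
proof -
  obtain a b where ab: "z = (a, b)" by fastforce
  define \<rho>1 where "\<rho>1 = \<beta> / l1 z"
  define \<rho>2 where "\<rho>2 = \<beta> / l2 z"
  note l = admissible_L_pos[OF adm z]
  have "1 < \<beta>" using adm by (simp add: admissible_L_def)
  then have \<rho>: "0 < \<rho>1" "0 < \<rho>2" using l by (simp_all add: \<rho>1_def \<rho>2_def)
  have "polydisc (a, b) (\<rho>1, \<rho>2) \<subseteq> bidisc"
    using polydisc_subset_bidisc[OF adm z order_refl order_refl] by (simp add: ab \<rho>1_def \<rho>2_def)
  then have Cauchy: "norm (pderiv2 F p q z) \<le> fact p * fact q * V / (\<rho>1 ^ p * \<rho>2 ^ q)"
    using norm_pderiv2_le_Cauchy[OF F \<rho>] bound by (simp add: ab \<rho>1_def \<rho>2_def)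
  have "nterm F l1 l2 p q z \<le>
      fact p * fact q * V / (\<rho>1 ^ p * \<rho>2 ^ q) / (fact p * fact q * l1 z ^ p * l2 z ^ q)"
    unfolding nterm_def by (rule divide_right_mono[OF Cauchy]) (use l in simp)
  also have "\<dots> = V / \<beta> ^ (p + q)"
  proof -
    have "\<rho>1 ^ p * l1 z ^ p = \<beta> ^ p" "\<rho>2 ^ q * l2 z ^ q = \<beta> ^ q"
      using l by (simp_all add: \<rho>1_def \<rho>2_def power_divide)
    then show ?thesis using l \<rho> by (simp add: power_add field_simps)
  qed
  finally show ?thesis .
qed

lemma bounded_L_index_if_dominated_on_polydiscs:
  assumes adm: "admissible_L \<beta> l1 l2" and F: "analytic_bidisc F"
    and dom: "dominated_on_polydiscs F l1 l2 \<beta> \<beta>"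
  shows "bounded_L_index F l1 l2"
proof -
  obtain n0 p0 where p0: "0 < p0" and dom: "\<forall>z0\<in>bidisc. \<exists>k01 k02. k01 + k02 \<le> n0 \<and>
      (\<forall>k1 k2 z. k1 + k2 \<le> n0 \<and> z \<in> polydisc z0 (\<beta> / l1 z0, \<beta> / l2 z0) \<longrightarrow>
         nterm F l1 l2 k1 k2 z \<le> p0 * nterm F l1 l2 k01 k02 z0)"
    using dom unfolding dominated_on_polydiscs_def by blast
  have "1 < \<beta>" using adm by (simp add: admissible_L_def)
  then obtain N1 where "p0 < \<beta> ^ N1" using real_arch_pow by blast
  define N where "N = max N1 n0"
  show ?thesis unfolding bounded_L_index_iff_nterm_max
  proof (intro exI[of _ N] ballI allI)
    fix z p q assume z: "z \<in> bidisc"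
    show "nterm F l1 l2 p q z \<le> nterm_max F l1 l2 N z"
    proof (cases "p + q \<le> N")
      case True
      then show ?thesis by (rule nterm_le_nterm_max)
    next
      case False
      obtain k01 k02 where k0: "k01 + k02 \<le> n0" and dom_z: "\<And>k1 k2 z'. k1 + k2 \<le> n0 \<Longrightarrow>
          z' \<in> polydisc z (\<beta> / l1 z, \<beta> / l2 z) \<Longrightarrow> nterm F l1 l2 k1 k2 z' \<le> p0 * nterm F l1 l2 k01 k02 z"
        using dom z by blast
      note l = admissible_L_pos[OF adm z]
      have "nterm F l1 l2 p q z \<le> p0 * nterm F l1 l2 k01 k02 z / \<beta> ^ (p + q)"
        using dom_z[of 0 0] by (intro nterm_le_of_polydisc_bound[OF adm F z]) (simp add: nterm_0_0)
      also have "\<dots> \<le> nterm F l1 l2 k01 k02 z"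
      proof -
        have "\<beta> ^ N1 \<le> \<beta> ^ (p + q)"
          using False \<open>1 < \<beta>\<close> by (intro power_increasing) (auto simp: N_def)
        then have "p0 \<le> \<beta> ^ (p + q)" using \<open>p0 < \<beta> ^ N1\<close> by linarith
        moreover have "0 \<le> nterm F l1 l2 k01 k02 z" using l by (intro nterm_nonneg) auto
        ultimately show ?thesis
          using p0 by (simp add: pos_divide_le_eq mult_right_mono mult.commute)
      qed
      also have "\<dots> \<le> nterm_max F l1 l2 N z"
        using k0 by (intro nterm_le_nterm_max) (simp add: N_def)
      finally show ?thesis .
    qed
  qed
qed

lemma Q2_ratio_bound_single:
  assumes adm: "admissible_L \<beta> l1 l2" and Q: "Q2 \<beta> l1 l2"
    and r: "0 \<le> r1" "r1 \<le> \<beta>" "0 \<le> r2" "r2 \<le> \<beta>" and l: "l \<in> {l1, l2}"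
  shows "\<exists>\<Lambda>\<ge>1. \<forall>z0\<in>bidisc. \<forall>z\<in>polydisc z0 (r1 / l1 z0, r2 / l2 z0).
    \<forall>z'\<in>polydisc z0 (r1 / l1 z0, r2 / l2 z0). l z \<le> \<Lambda> * l z'"
proof -
  define P where "P = (\<lambda>z0. polydisc z0 (r1 / l1 z0, r2 / l2 z0))"
  have "(\<exists>c>0. \<forall>z0\<in>bidisc. \<forall>z\<in>bidisc \<inter> P z0. c \<le> l z / l z0) \<and>
      (\<exists>C. \<forall>z0\<in>bidisc. \<forall>z\<in>bidisc \<inter> P z0. l z / l z0 \<le> C)"
    using Q[unfolded Q2_def, rule_format, of r1 r2] r l unfolding P_def by simp
  then obtain c C where c: "0 < c"
    and lower: "\<And>z0 z. z0 \<in> bidisc \<Longrightarrow> z \<in> bidisc \<inter> P z0 \<Longrightarrow> c \<le> l z / l z0"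
    and upper: "\<And>z0 z. z0 \<in> bidisc \<Longrightarrow> z \<in> bidisc \<inter> P z0 \<Longrightarrow> l z / l z0 \<le> C"
    by blast
  have P_sub: "P z0 \<subseteq> bidisc" if "z0 \<in> bidisc" for z0
    unfolding P_def using polydisc_subset_bidisc[OF adm that r(2,4)] .
  have pos: "0 < l z" if "z \<in> bidisc" for z
    using admissible_L_pos[OF adm that] l by auto
  have "l z \<le> max 1 (C / c) * l z'" if z0: "z0 \<in> bidisc" and "z \<in> P z0" "z' \<in> P z0" for z0 z z'
  proof -
    have "z \<in> bidisc" "z' \<in> bidisc" using P_sub[OF z0] that by auto
    then have "l z \<le> C * l z0" "c * l z0 \<le> l z'" "0 < l z / l z0"
      using lower[OF z0] upper[OF z0] that pos[OF z0] pos
      by (simp_all add: pos_divide_le_eq pos_le_divide_eq)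
    moreover have "0 \<le> C" using upper[OF z0, of z] that \<open>0 < l z / l z0\<close> \<open>z \<in> bidisc\<close> by simp
    ultimately have "l z \<le> C / c * (c * l z0)" "C / c * (c * l z0) \<le> C / c * l z'"
      using c by (simp, intro mult_left_mono) auto
    then have "l z \<le> C / c * l z'" by linarith
    also have "\<dots> \<le> max 1 (C / c) * l z'"
      using pos[OF \<open>z' \<in> bidisc\<close>] by (intro mult_right_mono) auto
    finally show ?thesis .
  qed
  then show ?thesis unfolding P_def by (intro exI[of _ "max 1 (C / c)"]) auto
qed

lemma le_power_mult_if_steps_le:
  fixes g :: "nat \<Rightarrow> real"
  assumes "\<And>i. i < n \<Longrightarrow> g (Suc i) \<le> K * g i" and "0 \<le> K"
  shows "g n \<le> K ^ n * g 0"
  using assms(1)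
proof (induction n)
  case (Suc n)
  then have "K * g n \<le> K * (K ^ n * g 0)" using assms(2) by (intro mult_left_mono) auto
  then show ?case using Suc.prems[of n] by simp
qed simp

lemma nterm_max_along_axis:
  assumes adm: "admissible_L \<beta> l1 l2" and F: "analytic_bidisc F"
    and index: "\<And>v p q. v \<in> bidisc \<Longrightarrow> nterm F l1 l2 p q v \<le> nterm_max F l1 l2 N v"
    and \<Lambda>: "1 \<le> \<Lambda>" and S: "convex S" "S \<subseteq> bidisc"
    and ratio: "\<And>v v'. v \<in> S \<Longrightarrow> v' \<in> S \<Longrightarrow> l1 v \<le> \<Lambda> * l1 v' \<and> l2 v \<le> \<Lambda> * l2 v'"
    and z: "z \<in> S" "z' \<in> S" and axis: "snd z' = snd z \<or> fst z' = fst z"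
    and m: "0 < m" "\<And>v. v \<in> S \<Longrightarrow> 4 * l1 v * norm (fst z' - fst z) \<le> real m"
      "\<And>v. v \<in> S \<Longrightarrow> 4 * l2 v * norm (snd z' - snd z) \<le> real m"
  shows "nterm_max F l1 l2 N z' \<le> (2 ^ (N + 1) * \<Lambda> ^ N) ^ m * nterm_max F l1 l2 N z"
proof -
  define \<gamma> where "\<gamma> = (\<lambda>i::nat. z + (real i / real m) *\<^sub>R (z' - z))"
  have \<gamma>_S: "\<gamma> i \<in> S" if "i \<le> m" for i
  proof -
    have "\<gamma> i = (1 - real i / real m) *\<^sub>R z + (real i / real m) *\<^sub>R z'"
      by (simp add: \<gamma>_def algebra_simps)
    then show ?thesis
      using convexD[OF S(1) z] that m(1) by simp
  qed
  have \<gamma>_Suc: "\<gamma> (Suc i) = \<gamma> i + (1 / real m) *\<^sub>R (z' - z)" for i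
    by (simp add: \<gamma>_def add_divide_distrib scaleR_add_left)
  have "nterm_max F l1 l2 N (\<gamma> (Suc i)) \<le> 2 ^ (N + 1) * \<Lambda> ^ N * nterm_max F l1 l2 N (\<gamma> i)"
    if "i < m" for i
  proof (rule nterm_max_step[OF adm F index])
    have S_i: "\<gamma> i \<in> S" "\<gamma> (Suc i) \<in> S" using \<gamma>_S that by auto
    then show "\<gamma> i \<in> bidisc" "\<gamma> (Suc i) \<in> bidisc" using S(2) by auto
    show "1 \<le> \<Lambda>" "l1 (\<gamma> i) \<le> \<Lambda> * l1 (\<gamma> (Suc i))" "l2 (\<gamma> i) \<le> \<Lambda> * l2 (\<gamma> (Suc i))"
      using \<Lambda> ratio[OF S_i] by auto
    have "4 * l1 (\<gamma> i) * norm (fst z' - fst z) / real m \<le> 1"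
      "4 * l2 (\<gamma> i) * norm (snd z' - snd z) / real m \<le> 1"
      using m(2,3)[OF S_i(1)] m(1) by simp_all
    then show "(snd (\<gamma> (Suc i)) = snd (\<gamma> i) \<and> 4 * l1 (\<gamma> i) * norm (fst (\<gamma> (Suc i)) - fst (\<gamma> i)) \<le> 1) \<or>
        (fst (\<gamma> (Suc i)) = fst (\<gamma> i) \<and> 4 * l2 (\<gamma> i) * norm (snd (\<gamma> (Suc i)) - snd (\<gamma> i)) \<le> 1)"
      using axis by (auto simp: \<gamma>_Suc norm_divide)
  qed
  then have "nterm_max F l1 l2 N (\<gamma> m) \<le> (2 ^ (N + 1) * \<Lambda> ^ N) ^ m * nterm_max F l1 l2 N (\<gamma> 0)"
    using \<Lambda> by (intro le_power_mult_if_steps_le) auto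
  moreover have "\<gamma> 0 = z" "\<gamma> m = z'" using m(1) by (simp_all add: \<gamma>_def)
  ultimately show ?thesis by simp
qed

lemma convex_polydisc: "convex (polydisc z0 R)"
  by (simp add: polydisc_eq_Times convex_Times)

lemma Q2_ratio_bound:
  assumes adm: "admissible_L \<beta> l1 l2" and Q: "Q2 \<beta> l1 l2"
    and r: "0 \<le> r1" "r1 \<le> \<beta>" "0 \<le> r2" "r2 \<le> \<beta>"
  obtains \<Lambda> where "1 \<le> \<Lambda>" and "\<And>z0 v v'. z0 \<in> bidisc \<Longrightarrow> v \<in> polydisc z0 (r1 / l1 z0, r2 / l2 z0) \<Longrightarrow>
      v' \<in> polydisc z0 (r1 / l1 z0, r2 / l2 z0) \<Longrightarrow> l1 v \<le> \<Lambda> * l1 v' \<and> l2 v \<le> \<Lambda> * l2 v'"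
proof -
  define P where "P = (\<lambda>z0. polydisc z0 (r1 / l1 z0, r2 / l2 z0))"
  obtain \<Lambda>1 \<Lambda>2 where "1 \<le> \<Lambda>1" "1 \<le> \<Lambda>2"
    and ratio1: "\<forall>z0\<in>bidisc. \<forall>v\<in>P z0. \<forall>v'\<in>P z0. l1 v \<le> \<Lambda>1 * l1 v'"
    and ratio2: "\<forall>z0\<in>bidisc. \<forall>v\<in>P z0. \<forall>v'\<in>P z0. l2 v \<le> \<Lambda>2 * l2 v'"
    using Q2_ratio_bound_single[OF adm Q r, of l1] Q2_ratio_bound_single[OF adm Q r, of l2]
    unfolding P_def by auto
  define \<Lambda> where "\<Lambda> = max \<Lambda>1 \<Lambda>2"
  have "l1 v \<le> \<Lambda> * l1 v' \<and> l2 v \<le> \<Lambda> * l2 v'"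
    if z0: "z0 \<in> bidisc" and "v \<in> P z0" "v' \<in> P z0" for z0 v v'
  proof -
    have "v' \<in> bidisc" using polydisc_subset_bidisc[OF adm z0 r(2,4)] that(3) by (auto simp: P_def)
    then have "0 < l1 v'" "0 < l2 v'" by (rule admissible_L_pos[OF adm])+
    then have "\<Lambda>1 * l1 v' \<le> \<Lambda> * l1 v'" "\<Lambda>2 * l2 v' \<le> \<Lambda> * l2 v'"
      by (simp_all add: \<Lambda>_def mult_right_mono)
    moreover have "l1 v \<le> \<Lambda>1 * l1 v'" "l2 v \<le> \<Lambda>2 * l2 v'"
      using ratio1 ratio2 z0 that(2,3) by blast+
    ultimately show ?thesis by linarith
  qed
  moreover have "1 \<le> \<Lambda>" using \<open>1 \<le> \<Lambda>1\<close> by (simp add: \<Lambda>_def)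
  ultimately show ?thesis using that unfolding P_def by blast
qed

lemma mult_le_of_ratio_bound:
  fixes a b d r \<Lambda> m :: real
  assumes "a \<le> \<Lambda> * b" "0 \<le> a" "0 < b" "0 \<le> d" "d \<le> r / b" "4 * \<Lambda> * r \<le> m"
  shows "4 * a * d \<le> m"
proof -
  have "a * d \<le> (\<Lambda> * b) * (r / b)"
    using assms by (intro mult_mono) auto
  also have "\<dots> = \<Lambda> * r" using assms(3) by simp
  finally show ?thesis using assms(6) by linarith
qed

lemma nterm_max_le_on_polydisc:
  assumes adm: "admissible_L \<beta> l1 l2" and F: "analytic_bidisc F"
    and index: "\<And>v p q. v \<in> bidisc \<Longrightarrow> nterm F l1 l2 p q v \<le> nterm_max F l1 l2 N v"
    and z0: "z0 \<in> bidisc" and r: "0 \<le> r1" "r1 \<le> \<beta>" "0 \<le> r2" "r2 \<le> \<beta>"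
    and \<Lambda>: "1 \<le> \<Lambda>" and ratio: "\<And>v v'. v \<in> polydisc z0 (r1 / l1 z0, r2 / l2 z0) \<Longrightarrow>
      v' \<in> polydisc z0 (r1 / l1 z0, r2 / l2 z0) \<Longrightarrow> l1 v \<le> \<Lambda> * l1 v' \<and> l2 v \<le> \<Lambda> * l2 v'"
    and m: "0 < m" "4 * \<Lambda> * r1 \<le> real m" "4 * \<Lambda> * r2 \<le> real m"
    and z: "z \<in> polydisc z0 (r1 / l1 z0, r2 / l2 z0)"
  shows "nterm_max F l1 l2 N z \<le> (2 ^ (N + 1) * \<Lambda> ^ N) ^ (2 * m) * nterm_max F l1 l2 N z0"
proof -
  define P where "P = polydisc z0 (r1 / l1 z0, r2 / l2 z0)"
  define K :: real where "K = 2 ^ (N + 1) * \<Lambda> ^ N"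
  note l0 = admissible_L_pos[OF adm z0]
  have P_sub: "P \<subseteq> bidisc" unfolding P_def by (rule polydisc_subset_bidisc[OF adm z0 r(2,4)])
  have z0_P: "z0 \<in> P" unfolding P_def using r l0 by (intro centre_in_polydisc) auto
  have ratio_P: "l1 v \<le> \<Lambda> * l1 v' \<and> l2 v \<le> \<Lambda> * l2 v'" if "v \<in> P" "v' \<in> P" for v v'
    using ratio that unfolding P_def .
  have dist: "norm (fst z - fst z0) \<le> r1 / l1 z0" "norm (snd z - snd z0) \<le> r2 / l2 z0"
    using z by (auto simp: polydisc_def)
  have steps: "4 * l1 v * norm (fst z - fst z0) \<le> real m" "4 * l2 v * norm (snd z - snd z0) \<le> real m"
    if "v \<in> P" for v
  proof -
    have "v \<in> bidisc" using P_sub that by auto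
    note lv = admissible_L_pos[OF adm this] and ratio_v = ratio_P[OF that z0_P]
    show "4 * l1 v * norm (fst z - fst z0) \<le> real m"
      by (rule mult_le_of_ratio_bound[of _ \<Lambda> "l1 z0" _ r1]) (use ratio_v lv l0 dist m in auto)
    show "4 * l2 v * norm (snd z - snd z0) \<le> real m"
      by (rule mult_le_of_ratio_bound[of _ \<Lambda> "l2 z0" _ r2]) (use ratio_v lv l0 dist m in auto)
  qed
  \<comment> \<open>Reach z from z0 along two axis-parallel segments.\<close>
  define z1 where "z1 = (fst z, snd z0)"
  have z_P: "z \<in> P" using z by (simp add: P_def)
  have z1: "z1 \<in> P" using z z0_P by (auto simp: P_def polydisc_def z1_def)
  have "convex P" by (simp add: P_def convex_polydisc)
  note leg = nterm_max_along_axis[OF adm F index \<Lambda> this P_sub ratio_P, folded K_def]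
  have "nterm_max F l1 l2 N z \<le> K ^ m * nterm_max F l1 l2 N z1"
    by (rule leg) (use steps m(1) z_P z1 in \<open>simp_all add: z1_def\<close>)
  also have "\<dots> \<le> K ^ m * (K ^ m * nterm_max F l1 l2 N z0)"
  proof (rule mult_left_mono)
    show "nterm_max F l1 l2 N z1 \<le> K ^ m * nterm_max F l1 l2 N z0"
      by (rule leg) (use steps m(1) z0_P z1 in \<open>simp_all add: z1_def\<close>)
    show "0 \<le> K ^ m" using \<Lambda> by (simp add: K_def)
  qed
  finally show ?thesis unfolding K_def[symmetric] by (simp add: mult_2 power_add)
qed

lemma dominated_on_polydiscs_if_bounded_L_index:
  assumes adm: "admissible_L \<beta> l1 l2" and Q: "Q2 \<beta> l1 l2" and F: "analytic_bidisc F"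
    and "bounded_L_index F l1 l2" and r: "0 \<le> r1" "r1 \<le> \<beta>" "0 \<le> r2" "r2 \<le> \<beta>"
  shows "dominated_on_polydiscs F l1 l2 r1 r2"
proof -
  obtain N where index: "\<And>v p q. v \<in> bidisc \<Longrightarrow> nterm F l1 l2 p q v \<le> nterm_max F l1 l2 N v"
    using assms(4) unfolding bounded_L_index_iff_nterm_max by blast
  obtain \<Lambda> where \<Lambda>: "1 \<le> \<Lambda>" and ratio: "\<And>z0 v v'. z0 \<in> bidisc \<Longrightarrow>
      v \<in> polydisc z0 (r1 / l1 z0, r2 / l2 z0) \<Longrightarrow> v' \<in> polydisc z0 (r1 / l1 z0, r2 / l2 z0) \<Longrightarrow>
      l1 v \<le> \<Lambda> * l1 v' \<and> l2 v \<le> \<Lambda> * l2 v'"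
    using Q2_ratio_bound[OF adm Q r] by blast
  define m where "m = nat \<lceil>4 * \<Lambda> * \<beta>\<rceil>"
  have "1 < \<beta>" using adm by (simp add: admissible_L_def)
  then have "0 < m" "4 * \<Lambda> * \<beta> \<le> real m"
    using \<Lambda> unfolding m_def by (auto simp: mult_pos_pos)
  moreover have "4 * \<Lambda> * r1 \<le> 4 * \<Lambda> * \<beta>" "4 * \<Lambda> * r2 \<le> 4 * \<Lambda> * \<beta>"
    using \<Lambda> r by simp_all
  ultimately have m: "0 < m" "4 * \<Lambda> * r1 \<le> real m" "4 * \<Lambda> * r2 \<le> real m" by linarith+
  define p0 :: real where "p0 = (2 ^ (N + 1) * \<Lambda> ^ N) ^ (2 * m)"
  show ?thesis
    unfolding dominated_on_polydiscs_def
  proof (rule exI[of _ N], rule exI[of _ p0], intro conjI ballI)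
    show "p0 > 0" using \<Lambda> by (simp add: p0_def)
    fix z0 assume z0: "z0 \<in> bidisc"
    obtain k01 k02 where k0: "k01 + k02 \<le> N"
      and max0: "nterm_max F l1 l2 N z0 = nterm F l1 l2 k01 k02 z0"
      using nterm_max_attained by blast
    have "nterm F l1 l2 k1 k2 z \<le> p0 * nterm F l1 l2 k01 k02 z0"
      if "k1 + k2 \<le> N" "z \<in> polydisc z0 (r1 / l1 z0, r2 / l2 z0)" for k1 k2 z
      using nterm_le_nterm_max[OF that(1), of F l1 l2 z]
        nterm_max_le_on_polydisc[OF adm F index z0 r \<Lambda> ratio[OF z0] m that(2)]
      unfolding max0 p0_def by linarith
    then show "\<exists>k01 k02. k01 + k02 \<le> N \<and> (\<forall>k1 k2 z. k1 + k2 \<le> N \<and>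
        z \<in> polydisc z0 (r1 / l1 z0, r2 / l2 z0) \<longrightarrow>
          nterm F l1 l2 k1 k2 z \<le> p0 * nterm F l1 l2 k01 k02 z0)"
      using k0 by blast
  qed
qed

theorem theorem1:
  fixes \<beta> :: real
    and l1 l2 :: "complex \<times> complex \<Rightarrow> real"
    and F :: "complex \<times> complex \<Rightarrow> complex"
  assumes "admissible_L \<beta> l1 l2"
    and "Q2 \<beta> l1 l2"
    and "analytic_bidisc F"
  shows "bounded_L_index F l1 l2 \<longleftrightarrow>
    (\<forall>r1 r2. 0 < r1 \<and> r1 \<le> \<beta> \<and> 0 < r2 \<and> r2 \<le> \<beta> \<longrightarrow>
      (\<exists>n0::nat. \<exists>p0::real. p0 > 0 \<and>
        (\<forall>z0\<in>bidisc. \<exists>k01 k02. k01 + k02 \<le> n0 \<and>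
          (\<forall>k1 k2 z. k1 + k2 \<le> n0 \<and> z \<in> polydisc z0 (r1 / l1 z0, r2 / l2 z0) \<longrightarrow>
             nterm F l1 l2 k1 k2 z \<le>
               p0 / (fact k01 * fact k02) *
               (norm (pderiv2 F k01 k02 z0) / (l1 z0 ^ k01 * l2 z0 ^ k02))))))"
  unfolding scaled_nterm_eq dominated_on_polydiscs_def[symmetric]
proof
  assume "bounded_L_index F l1 l2"
  then show "\<forall>r1 r2. 0 < r1 \<and> r1 \<le> \<beta> \<and> 0 < r2 \<and> r2 \<le> \<beta> \<longrightarrow> dominated_on_polydiscs F l1 l2 r1 r2"
    using dominated_on_polydiscs_if_bounded_L_index[OF assms] by simp
next
  assume "\<forall>r1 r2. 0 < r1 \<and> r1 \<le> \<beta> \<and> 0 < r2 \<and> r2 \<le> \<beta> \<longrightarrow> dominated_on_polydiscs F l1 l2 r1 r2"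
  moreover have "0 < \<beta>" using assms(1) by (simp add: admissible_L_def)
  ultimately show "bounded_L_index F l1 l2"
    using bounded_L_index_if_dominated_on_polydiscs[OF assms(1,3)] by simp
qed

end
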